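(* Let $T=(V,E)$ be a tree with $n$ vertices $V=\{v_1,\dots,v_n\}$, rooted at $v_1$, and let $Y$ be its set of leaves. Each edge $e\in E$ carries an original length $w(e)$ and an upgraded length $u(e)$ with $w(e)\le u(e)$, and let $K$ be a given nonnegative integer. The maximum shortest path interdiction problem by upgrading nodes on trees under unit cost, $$\max_{S\subseteq V,\ |S|\le K}\ \min_{t\in Y}\bar w(P_{v_1,t}),\qquad \bar w(e)=\begin{cases}u(e), & e\in A(v)\text{ for some } v\in S,\\ w(e), & \text{otherwise},\end{cases}$$ can be solved (i.e., an optimal set $S$, the corresponding length vector $\bar w$, and the optimal value are computed) in $O(n^3)$ time by a dynamic programming algorithm.
   Context: For a vertex $v_i$, $A(v_i)=\{(v_i,v_j)\in E : v_j \text{ is a child of } v_i\}$ is the set of edges from $v_i$ to its children; "upgrading" a vertex $v$ replaces the length of every edge in $A(v)$ by its upgraded length $u(e)$. For a leaf $t\in Y$, $P_{v_1,t}$ denotes the unique path in $T$ from the root $v_1$ to $t$, and $\bar w(P_{v_1,t})=\sum_{e\in P_{v_1,t}}\bar w(e)$. Each vertex has unit upgrade cost, so the budget constraint is $|S|\le K$. *)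

theory Defs
  imports Complex_Main "HOL-Library.Time_Functions"
begin

text \<open>A rooted tree with n vertices 0,...,n-1 (vertex i stands for v_(i+1)), rooted at 0, is
given by a parent list ps of length n: for 0 < i < n the parent of i is ps!i, with ps!i < i
(every rooted tree admits such a labelling, e.g. by BFS order); ps!0 is ignored.
The edge (ps!i, i) carries original length ws!i and upgraded length us!i.\<close>

definition tree_input :: "nat list \<Rightarrow> real list \<Rightarrow> real list \<Rightarrow> bool" where
  "tree_input ps ws us \<longleftrightarrow> length ps \<ge> 1 \<and> length ws = length ps \<and> length us = length ps
     \<and> (\<forall>i. 0 < i \<and> i < length ps \<longrightarrow> ps ! i < i)
     \<and> (\<forall>i. 0 < i \<and> i < length ps \<longrightarrow> ws ! i \<le> us ! i)"

definition tV :: "nat list \<Rightarrow> nat set" where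
  "tV ps = {0..<length ps}"

definition tE :: "nat list \<Rightarrow> (nat \<times> nat) set" where
  "tE ps = {(ps ! i, i) | i. 0 < i \<and> i < length ps}"

definition tA :: "nat list \<Rightarrow> nat \<Rightarrow> (nat \<times> nat) set" where
  "tA ps v = {e \<in> tE ps. fst e = v}"

definition leaves :: "nat list \<Rightarrow> nat set" where
  "leaves ps = {t \<in> tV ps. tA ps t = {}}"

definition w_len :: "real list \<Rightarrow> nat \<times> nat \<Rightarrow> real" where
  "w_len ws e = ws ! snd e"

definition wbar :: "nat list \<Rightarrow> real list \<Rightarrow> real list \<Rightarrow> nat set \<Rightarrow> nat \<times> nat \<Rightarrow> real" where
  "wbar ps ws us S e = (if \<exists>v\<in>S. e \<in> tA ps v then w_len us e else w_len ws e)"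

text \<open>Edges of the path from the root 0 to t: the edges (ps!i, i) with i a non-root
ancestor-or-self of t.\<close>
definition parent :: "nat list \<Rightarrow> nat \<Rightarrow> nat" where
  "parent ps j = (if j = 0 then 0 else ps ! j)"

definition path_edges :: "nat list \<Rightarrow> nat \<Rightarrow> (nat \<times> nat) set" where
  "path_edges ps t = {(ps ! i, i) | i. 0 < i \<and> (\<exists>k. (parent ps ^^ k) t = i)}"

definition path_len :: "nat list \<Rightarrow> real list \<Rightarrow> real list \<Rightarrow> nat set \<Rightarrow> nat \<Rightarrow> real" where
  "path_len ps ws us S t = (\<Sum>e\<in>path_edges ps t. wbar ps ws us S e)"

definition objective :: "nat list \<Rightarrow> real list \<Rightarrow> real list \<Rightarrow> nat set \<Rightarrow> real" where
  "objective ps ws us S = Min (path_len ps ws us S ` leaves ps)"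

definition feasible :: "nat list \<Rightarrow> nat \<Rightarrow> nat set \<Rightarrow> bool" where
  "feasible ps K S \<longleftrightarrow> S \<subseteq> tV ps \<and> card S \<le> K"

definition opt_value :: "nat list \<Rightarrow> real list \<Rightarrow> real list \<Rightarrow> nat \<Rightarrow> real" where
  "opt_value ps ws us K = Max (objective ps ws us ` {S. feasible ps K S})"

text \<open>DP table of a vertex v: list indexed by k = 0..K of (best value, upgraded vertices)
for the subtree of v using at most k upgrades.\<close>

fun kids :: "nat \<Rightarrow> nat list \<Rightarrow> nat \<Rightarrow> nat list" where
  "kids v [] i = []"
| "kids v (p # ps) i = (if p = v \<and> i \<noteq> 0 then i # kids v ps (Suc i) else kids v ps (Suc i))"

fun zeros :: "nat \<Rightarrow> (real \<times> nat list) list" where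
  "zeros 0 = []"
| "zeros (Suc k) = (0, []) # zeros k"

fun shift :: "real \<Rightarrow> (real \<times> nat list) list \<Rightarrow> (real \<times> nat list) list" where
  "shift L [] = []"
| "shift L ((a, s) # xs) = (L + a, s) # shift L xs"

fun bestk :: "(real \<times> nat list) list \<Rightarrow> (real \<times> nat list) list \<Rightarrow> real \<times> nat list \<times> nat list
    \<Rightarrow> real \<times> nat list \<times> nat list" where
  "bestk ((g, s1) # gs) ((c, s2) # cs) (b, t1, t2) =
     bestk gs cs (if b < min g c then (min g c, s1, s2) else (b, t1, t2))"
| "bestk gs cs best = best"

fun bestk0 :: "(real \<times> nat list) list \<Rightarrow> (real \<times> nat list) list \<Rightarrow> real \<times> nat list \<times> nat list" where
  "bestk0 ((g, s1) # gs) ((c, s2) # cs) = bestk gs cs (min g c, s1, s2)"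
| "bestk0 gs cs = (0, [], [])"

fun fin :: "real \<times> nat list \<times> nat list \<Rightarrow> real \<times> nat list" where
  "fin (m, s1, s2) = (m, s1 @ s2)"

fun mergeAt :: "(real \<times> nat list) list \<Rightarrow> (real \<times> nat list) list \<Rightarrow> nat \<Rightarrow> real \<times> nat list" where
  "mergeAt G C k = fin (bestk0 (itrev (take (Suc k) G) []) C)"

fun mergeFrom :: "(real \<times> nat list) list \<Rightarrow> (real \<times> nat list) list \<Rightarrow> nat \<Rightarrow> nat
    \<Rightarrow> (real \<times> nat list) list" where
  "mergeFrom G C k 0 = []"
| "mergeFrom G C k (Suc r) = mergeAt G C k # mergeFrom G C (Suc k) r"

fun childTab :: "real list \<Rightarrow> (real \<times> nat list) list list \<Rightarrow> nat \<Rightarrow> nat \<Rightarrow> (real \<times> nat list) list" where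
  "childTab ls acc v c = shift (ls ! c) (acc ! (c - v - 1))"

fun mergeKids :: "real list \<Rightarrow> (real \<times> nat list) list list \<Rightarrow> nat \<Rightarrow> nat \<Rightarrow> (real \<times> nat list) list
    \<Rightarrow> nat list \<Rightarrow> (real \<times> nat list) list" where
  "mergeKids ls acc v K G [] = G"
| "mergeKids ls acc v K G (c # cs) = mergeKids ls acc v K (mergeFrom G (childTab ls acc v c) 0 (Suc K)) cs"

fun kidsTab :: "real list \<Rightarrow> (real \<times> nat list) list list \<Rightarrow> nat \<Rightarrow> nat \<Rightarrow> nat list
    \<Rightarrow> (real \<times> nat list) list" where
  "kidsTab ls acc v K [] = []"
| "kidsTab ls acc v K (c # cs) = mergeKids ls acc v K (childTab ls acc v c) cs"

fun cx2 :: "(real \<times> nat list) list \<Rightarrow> (real \<times> nat list) list \<Rightarrow> nat \<Rightarrow> (real \<times> nat list) list" where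
  "cx2 ((a, sa) # as) ((b, sb) # bs) v = (if a < b then (b, v # sb) else (a, sa)) # cx2 as bs v"
| "cx2 as bs v = []"

fun cx :: "(real \<times> nat list) list \<Rightarrow> (real \<times> nat list) list \<Rightarrow> nat \<Rightarrow> (real \<times> nat list) list" where
  "cx (t # ts) T1 v = t # cx2 ts T1 v"
| "cx [] T1 v = []"

fun node :: "nat list \<Rightarrow> real list \<Rightarrow> real list \<Rightarrow> nat \<Rightarrow> nat \<Rightarrow> (real \<times> nat list) list list
    \<Rightarrow> (real \<times> nat list) list" where
  "node ps ws us K v acc =
     (let cs = kids v ps 0 in
      if cs = [] then zeros (Suc K)
      else cx (kidsTab ws acc v K cs) (kidsTab us acc v K cs) v)"

fun build :: "nat list \<Rightarrow> real list \<Rightarrow> real list \<Rightarrow> nat \<Rightarrow> nat \<Rightarrow> (real \<times> nat list) list list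
    \<Rightarrow> (real \<times> nat list) list list" where
  "build ps ws us K 0 acc = acc"
| "build ps ws us K (Suc v) acc = build ps ws us K v (node ps ws us K v acc # acc)"

fun mem :: "nat \<Rightarrow> nat list \<Rightarrow> bool" where
  "mem x [] = False"
| "mem x (y # ys) = (x = y \<or> mem x ys)"

text \<open>Upgraded length vector, indexed like ws/us by the child endpoint of the edge.\<close>
fun wbList :: "nat list \<Rightarrow> real list \<Rightarrow> real list \<Rightarrow> nat list \<Rightarrow> real list" where
  "wbList (p # ps) (w # ws) (u # us) S = (if mem p S then u else w) # wbList ps ws us S"
| "wbList ps ws us S = []"

fun out :: "nat list \<Rightarrow> real list \<Rightarrow> real list \<Rightarrow> real \<times> nat list \<Rightarrow> real \<times> nat list \<times> real list" where
  "out ps ws us (val, S) = (val, S, wbList ps ws us S)"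

fun alg :: "nat list \<Rightarrow> real list \<Rightarrow> real list \<Rightarrow> nat \<Rightarrow> real \<times> nat list \<times> real list" where
  "alg ps ws us K =
     (let n = length ps; Kc = min K n in
      out ps ws us (build ps ws us Kc n [] ! 0 ! Kc))"


text \<open>Library operations take, itrev, nth,
append, length use the library's T_ functions; arithmetic, comparisons, min are 0-time.\<close>

fun T_kids :: "nat \<Rightarrow> nat list \<Rightarrow> nat \<Rightarrow> nat" where
  "T_kids v [] i = 1"
| "T_kids v (p # ps) i = T_kids v ps (Suc i) + 1"

fun T_zeros :: "nat \<Rightarrow> nat" where
  "T_zeros 0 = 1"
| "T_zeros (Suc k) = T_zeros k + 1"

fun T_shift :: "real \<Rightarrow> (real \<times> nat list) list \<Rightarrow> nat" where
  "T_shift L [] = 1"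
| "T_shift L ((a, s) # xs) = T_shift L xs + 1"

fun T_bestk :: "(real \<times> nat list) list \<Rightarrow> (real \<times> nat list) list \<Rightarrow> real \<times> nat list \<times> nat list \<Rightarrow> nat" where
  "T_bestk ((g, s1) # gs) ((c, s2) # cs) (b, t1, t2) =
     T_bestk gs cs (if b < min g c then (min g c, s1, s2) else (b, t1, t2)) + 1"
| "T_bestk gs cs best = 1"

fun T_bestk0 :: "(real \<times> nat list) list \<Rightarrow> (real \<times> nat list) list \<Rightarrow> nat" where
  "T_bestk0 ((g, s1) # gs) ((c, s2) # cs) = T_bestk gs cs (min g c, s1, s2)"
| "T_bestk0 gs cs = 0"

fun T_fin :: "real \<times> nat list \<times> nat list \<Rightarrow> nat" where
  "T_fin (m, s1, s2) = T_append s1 s2"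

fun T_mergeAt :: "(real \<times> nat list) list \<Rightarrow> (real \<times> nat list) list \<Rightarrow> nat \<Rightarrow> nat" where
  "T_mergeAt G C k =
     T_take (Suc k) G + T_itrev (take (Suc k) G) [] +
     T_bestk0 (itrev (take (Suc k) G) []) C +
     T_fin (bestk0 (itrev (take (Suc k) G) []) C)"

fun T_mergeFrom :: "(real \<times> nat list) list \<Rightarrow> (real \<times> nat list) list \<Rightarrow> nat \<Rightarrow> nat \<Rightarrow> nat" where
  "T_mergeFrom G C k 0 = 1"
| "T_mergeFrom G C k (Suc r) = T_mergeAt G C k + T_mergeFrom G C (Suc k) r + 1"

fun T_childTab :: "real list \<Rightarrow> (real \<times> nat list) list list \<Rightarrow> nat \<Rightarrow> nat \<Rightarrow> nat" where
  "T_childTab ls acc v c =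
     T_nth ls c + (T_nth acc (c - v - 1) + T_shift (ls ! c) (acc ! (c - v - 1)))"

fun T_mergeKids :: "real list \<Rightarrow> (real \<times> nat list) list list \<Rightarrow> nat \<Rightarrow> nat
    \<Rightarrow> (real \<times> nat list) list \<Rightarrow> nat list \<Rightarrow> nat" where
  "T_mergeKids ls acc v K G [] = 1"
| "T_mergeKids ls acc v K G (c # cs) =
     T_childTab ls acc v c + T_mergeFrom G (childTab ls acc v c) 0 (Suc K) +
     T_mergeKids ls acc v K (mergeFrom G (childTab ls acc v c) 0 (Suc K)) cs + 1"

fun T_kidsTab :: "real list \<Rightarrow> (real \<times> nat list) list list \<Rightarrow> nat \<Rightarrow> nat \<Rightarrow> nat list \<Rightarrow> nat" where
  "T_kidsTab ls acc v K [] = 0"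
| "T_kidsTab ls acc v K (c # cs) = T_childTab ls acc v c + T_mergeKids ls acc v K (childTab ls acc v c) cs"

fun T_cx2 :: "(real \<times> nat list) list \<Rightarrow> (real \<times> nat list) list \<Rightarrow> nat \<Rightarrow> nat" where
  "T_cx2 ((a, sa) # as) ((b, sb) # bs) v = T_cx2 as bs v + 1"
| "T_cx2 as bs v = 1"

fun T_cx :: "(real \<times> nat list) list \<Rightarrow> (real \<times> nat list) list \<Rightarrow> nat \<Rightarrow> nat" where
  "T_cx (t # ts) T1 v = T_cx2 ts T1 v"
| "T_cx [] T1 v = 0"

fun T_node :: "nat list \<Rightarrow> real list \<Rightarrow> real list \<Rightarrow> nat \<Rightarrow> nat \<Rightarrow> (real \<times> nat list) list list \<Rightarrow> nat" where
  "T_node ps ws us K v acc =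
     T_kids v ps 0 +
     (let cs = kids v ps 0
      in if cs = [] then T_zeros (Suc K)
         else T_kidsTab ws acc v K cs +
              (T_kidsTab us acc v K cs +
               T_cx (kidsTab ws acc v K cs) (kidsTab us acc v K cs) v))"

fun T_build :: "nat list \<Rightarrow> real list \<Rightarrow> real list \<Rightarrow> nat \<Rightarrow> nat \<Rightarrow> (real \<times> nat list) list list \<Rightarrow> nat" where
  "T_build ps ws us K 0 acc = 1"
| "T_build ps ws us K (Suc v) acc =
     T_node ps ws us K v acc + T_build ps ws us K v (node ps ws us K v acc # acc) + 1"

fun T_mem :: "nat \<Rightarrow> nat list \<Rightarrow> nat" where
  "T_mem x [] = 1"
| "T_mem x (y # ys) = T_mem x ys + 1"

fun T_wbList :: "nat list \<Rightarrow> real list \<Rightarrow> real list \<Rightarrow> nat list \<Rightarrow> nat" where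
  "T_wbList (p # ps) (w # ws) (u # us) S = T_mem p S + T_wbList ps ws us S + 1"
| "T_wbList ps ws us S = 1"

fun T_out :: "nat list \<Rightarrow> real list \<Rightarrow> real list \<Rightarrow> real \<times> nat list \<Rightarrow> nat" where
  "T_out ps ws us (val, S) = T_wbList ps ws us S"

fun T_alg :: "nat list \<Rightarrow> real list \<Rightarrow> real list \<Rightarrow> nat \<Rightarrow> nat" where
  "T_alg ps ws us K =
     T_length ps +
     (let n = length ps; Kc = min K n
      in T_build ps ws us Kc n [] + T_nth (build ps ws us Kc n []) 0 +
         T_nth (build ps ws us Kc n [] ! 0) Kc +
         T_out ps ws us (build ps ws us Kc n [] ! 0 ! Kc))"

end

theory Submission
  imports Defs
begin

(*
  For a fixed upgrade set S the objective is the distance from the root to the nearest leaf, which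
  satisfies h(t) = 0 at a leaf t and otherwise h(v) = min over the children c of v of
  (u(v,c) if v is in S, else w(v,c)) + h(c).  The value h(v) only depends on the part of S inside the
  subtree of v, and the subtrees of distinct children are disjoint.  Hence the best value that at most
  k upgrades inside a union of child subtrees can achieve is a max-min convolution of the tables of
  the children, and afterwards upgrading v itself costs one unit and replaces the lengths of all edges
  to its children by the upgraded ones.  Filling bottom-up, for every vertex, the table
  k |-> (best value, optimal set) for k <= min(K, n) merges each child into its parent once, at cost
  O(K^2), which gives O(n K^2 + n^2) = O(n^3) steps in total.
*)

section \<open>Ancestors, subtrees and children\<close>

definition ancestor :: "nat list \<Rightarrow> nat \<Rightarrow> nat \<Rightarrow> bool" where
  "ancestor ps v t \<longleftrightarrow> (\<exists>k. (parent ps ^^ k) t = v)"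

definition subtree :: "nat list \<Rightarrow> nat \<Rightarrow> nat set" where
  "subtree ps v = {t. t < length ps \<and> ancestor ps v t}"

(* The condition v < c is redundant for a parent list (see children_iff); it makes leaf_dist terminate. *)
definition children :: "nat list \<Rightarrow> nat \<Rightarrow> nat set" where
  "children ps v = {c. v < c \<and> c < length ps \<and> ps ! c = v}"

lemma parent_funpow_root: "(parent ps ^^ k) 0 = 0"
  by (induction k) (auto simp: parent_def)

lemma ancestor_iff: "ancestor ps v t \<longleftrightarrow> t = v \<or> (t \<noteq> 0 \<and> ancestor ps v (ps ! t))"
proof
  assume "ancestor ps v t"
  then obtain k where k: "(parent ps ^^ k) t = v"
    unfolding ancestor_def by blast
  show "t = v \<or> (t \<noteq> 0 \<and> ancestor ps v (ps ! t))"
  proof (cases k)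
    case (Suc j)
    then have "(parent ps ^^ j) (parent ps t) = v"
      using k by (simp add: funpow_Suc_right del: funpow.simps)
    then show ?thesis
      using parent_funpow_root by (cases "t = 0") (auto simp: parent_def ancestor_def)
  qed (use k in simp)
next
  assume "t = v \<or> (t \<noteq> 0 \<and> ancestor ps v (ps ! t))"
  then show "ancestor ps v t"
  proof
    assume "t \<noteq> 0 \<and> ancestor ps v (ps ! t)"
    then obtain k where "(parent ps ^^ k) (parent ps t) = v"
      by (auto simp: ancestor_def parent_def)
    then have "(parent ps ^^ Suc k) t = v"
      by (simp add: funpow_Suc_right del: funpow.simps)
    then show ?thesis
      unfolding ancestor_def by blast
  qed (auto simp: ancestor_def intro: exI[of _ 0])
qed

lemma ancestor_refl [simp]: "ancestor ps v v"
  unfolding ancestor_def by (metis funpow_0)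

lemma ancestor_trans: "ancestor ps a b \<Longrightarrow> ancestor ps b c \<Longrightarrow> ancestor ps a c"
  unfolding ancestor_def by (metis funpow_add comp_apply)

lemma ancestor_linear:
  assumes "ancestor ps a t" and "ancestor ps b t"
  shows "ancestor ps a b \<or> ancestor ps b a"
proof -
  obtain k1 k2 where k: "(parent ps ^^ k1) t = a" "(parent ps ^^ k2) t = b"
    using assms unfolding ancestor_def by blast
  have "(parent ps ^^ (k2 - k1)) a = b" if "k1 \<le> k2"
    using k that by (metis le_add_diff_inverse2 funpow_add comp_apply)
  moreover have "(parent ps ^^ (k1 - k2)) b = a" if "k2 \<le> k1"
    using k that by (metis le_add_diff_inverse2 funpow_add comp_apply)
  ultimately show ?thesis
    unfolding ancestor_def using nat_le_linear by blast
qed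

lemma ancestor_child: "c \<in> children ps v \<Longrightarrow> ancestor ps v c"
  unfolding children_def by (subst ancestor_iff) auto

lemma finite_subtree: "finite (subtree ps v)"
  unfolding subtree_def by auto

lemma finite_children: "finite (children ps v)"
  unfolding children_def by auto

locale parent_tree =
  fixes ps :: "nat list"
  assumes nonempty: "ps \<noteq> []"
    and parent_less: "\<lbrakk>0 < i; i < length ps\<rbrakk> \<Longrightarrow> ps ! i < i"

lemma tree_input_parent_tree: "tree_input ps ws us \<Longrightarrow> parent_tree ps"
  unfolding tree_input_def parent_tree_def by auto

context parent_tree
begin

lemma children_iff: "c \<in> children ps v \<longleftrightarrow> 0 < c \<and> c < length ps \<and> ps ! c = v"
  unfolding children_def using parent_less by fastforce

lemma ancestor_le: "t < length ps \<Longrightarrow> ancestor ps v t \<Longrightarrow> v \<le> t"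
proof (induction t rule: less_induct)
  case (less t)
  show ?case
  proof (cases "t = v")
    case False
    then have "t \<noteq> 0" "ancestor ps v (ps ! t)"
      using less.prems ancestor_iff by blast+
    moreover have "ps ! t < t"
      using parent_less \<open>t \<noteq> 0\<close> less.prems by simp
    ultimately show ?thesis
      using less.IH less.prems by fastforce
  qed simp
qed

lemma ancestor_root: "t < length ps \<Longrightarrow> ancestor ps 0 t"
proof (induction t rule: less_induct)
  case (less t)
  then show ?case
    using parent_less[of t] ancestor_iff[of ps 0 t] by (cases "t = 0") auto
qed

lemma child_towards:
  "\<lbrakk>t < length ps; ancestor ps v t; t \<noteq> v\<rbrakk> \<Longrightarrow> \<exists>c\<in>children ps v. ancestor ps c t"
proof (induction t rule: less_induct)
  case (less t)
  then have t: "t \<noteq> 0" "ancestor ps v (ps ! t)"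
    using ancestor_iff by blast+
  then have "ps ! t < t"
    using parent_less less.prems by simp
  show ?case
  proof (cases "ps ! t = v")
    case True
    then have "t \<in> children ps v"
      using t \<open>ps ! t < t\<close> less.prems by (auto simp: children_iff)
    then show ?thesis
      using ancestor_refl by blast
  next
    case False
    moreover have "ps ! t < length ps"
      using \<open>ps ! t < t\<close> less.prems by linarith
    ultimately obtain c where "c \<in> children ps v" "ancestor ps c (ps ! t)"
      using less.IH[OF \<open>ps ! t < t\<close>] t by blast
    then show ?thesis
      using t ancestor_iff by blast
  qed
qed

lemma proper_ancestor_of_child:
  assumes "c \<in> children ps v" "ancestor ps a c" "a \<noteq> c"
  shows "a \<le> v"
proof -
  have "ancestor ps a v"
    using assms ancestor_iff[of ps a c] by (auto simp: children_iff)
  then show ?thesis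
    using assms ancestor_le by (auto simp: children_def)
qed

lemma subtree_child: "c \<in> children ps v \<Longrightarrow> subtree ps c \<subseteq> subtree ps v"
  unfolding subtree_def using ancestor_child ancestor_trans by blast

lemma notin_subtree_child: "c \<in> children ps v \<Longrightarrow> v \<notin> subtree ps c"
  unfolding subtree_def children_def using ancestor_le by fastforce

lemma subtree_children_disjoint:
  assumes "c1 \<in> children ps v" "c2 \<in> children ps v" "c1 \<noteq> c2"
  shows "subtree ps c1 \<inter> subtree ps c2 = {}"
proof -
  have "\<not> ancestor ps c1 c2" "\<not> ancestor ps c2 c1"
    using assms proper_ancestor_of_child by (fastforce simp: children_def)+
  then show ?thesis
    unfolding subtree_def using ancestor_linear by blast
qed

lemma subtree_decomp: "v < length ps \<Longrightarrow> subtree ps v = insert v (\<Union>c\<in>children ps v. subtree ps c)"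
  using child_towards subtree_child by (fastforce simp: subtree_def)

lemma subtree_root: "subtree ps 0 = tV ps"
  unfolding subtree_def tV_def using ancestor_root by auto

lemma leaves_iff: "t \<in> leaves ps \<longleftrightarrow> t < length ps \<and> children ps t = {}"
  unfolding leaves_def tV_def tA_def tE_def by (auto simp: children_iff)

end

section \<open>Shortest distance to a leaf\<close>

function leaf_dist :: "nat list \<Rightarrow> real list \<Rightarrow> real list \<Rightarrow> nat set \<Rightarrow> nat \<Rightarrow> real" where
  "leaf_dist ps ws us S v =
     (if children ps v = {} then 0
      else Min ((\<lambda>c. (if v \<in> S then us ! c else ws ! c) + leaf_dist ps ws us S c) ` children ps v))"
  by pat_completeness auto
termination
  by (relation "measure (\<lambda>(ps, ws, us, S, v). length ps - v)") (auto simp: children_def)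

declare leaf_dist.simps [simp del]

lemma leaf_dist_leaf: "children ps v = {} \<Longrightarrow> leaf_dist ps ws us S v = 0"
  by (simp add: leaf_dist.simps)

lemma leaf_dist_inner:
  "children ps v \<noteq> {} \<Longrightarrow>
   leaf_dist ps ws us S v =
     Min ((\<lambda>c. (if v \<in> S then us ! c else ws ! c) + leaf_dist ps ws us S c) ` children ps v)"
  by (subst leaf_dist.simps) simp

definition edge_len :: "nat list \<Rightarrow> real list \<Rightarrow> real list \<Rightarrow> nat set \<Rightarrow> nat \<Rightarrow> real" where
  "edge_len ps ws us S i = (if ps ! i \<in> S then us ! i else ws ! i)"

lemma wbar_edge: "0 < i \<Longrightarrow> i < length ps \<Longrightarrow> wbar ps ws us S (ps ! i, i) = edge_len ps ws us S i"
  unfolding wbar_def tA_def tE_def w_len_def edge_len_def by auto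

lemma edge_len_child: "c \<in> children ps v \<Longrightarrow> edge_len ps ws us S c = (if v \<in> S then us ! c else ws ! c)"
  by (simp add: edge_len_def children_def)

lemma path_edges_eq: "path_edges ps t = (\<lambda>i. (ps ! i, i)) ` {i. 0 < i \<and> ancestor ps i t}"
  unfolding path_edges_def ancestor_def by auto

context parent_tree
begin

lemma path_len_eq_sum:
  assumes "t < length ps"
  shows "path_len ps ws us S t = (\<Sum>i\<in>{i. 0 < i \<and> ancestor ps i t}. edge_len ps ws us S i)"
proof -
  have "path_len ps ws us S t = (\<Sum>i\<in>{i. 0 < i \<and> ancestor ps i t}. wbar ps ws us S (ps ! i, i))"
    unfolding path_len_def path_edges_eq by (subst sum.reindex) (auto intro: inj_onI)
  also have "\<dots> = (\<Sum>i\<in>{i. 0 < i \<and> ancestor ps i t}. edge_len ps ws us S i)"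
  proof (rule sum.cong)
    fix i assume "i \<in> {i. 0 < i \<and> ancestor ps i t}"
    then have "0 < i" "i < length ps"
      using assms ancestor_le[OF assms] by fastforce+
    then show "wbar ps ws us S (ps ! i, i) = edge_len ps ws us S i"
      by (rule wbar_edge)
  qed simp
  finally show ?thesis .
qed

lemma path_len_root: "path_len ps ws us S 0 = 0"
proof -
  have no_edges: "{i. 0 < i \<and> ancestor ps i 0} = {}"
    using ancestor_le[of 0] nonempty by fastforce
  show ?thesis
    using path_len_eq_sum[of 0] nonempty by (simp add: no_edges)
qed

lemma path_len_child:
  assumes c: "c \<in> children ps v"
  shows "path_len ps ws us S c = path_len ps ws us S v + edge_len ps ws us S c"
proof -
  have c': "0 < c" "c < length ps" "ps ! c = v" "v < c"
    using c by (auto simp: children_iff children_def)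
  have "{i. 0 < i \<and> ancestor ps i c} = insert c {i. 0 < i \<and> ancestor ps i v}"
    using c' ancestor_iff[of ps _ c] by auto
  moreover have "\<not> ancestor ps c v"
    using c' ancestor_le[of v c] by auto
  moreover have "finite {i. 0 < i \<and> ancestor ps i v}"
    using c' ancestor_le[of v] by (auto intro: finite_subset[of _ "{..v}"])
  ultimately show ?thesis
    using c' path_len_eq_sum[of c] path_len_eq_sum[of v] by simp
qed

lemma leaf_dist_le_path:
  "\<lbrakk>v < length ps; t \<in> leaves ps; ancestor ps v t\<rbrakk>
   \<Longrightarrow> path_len ps ws us S v + leaf_dist ps ws us S v \<le> path_len ps ws us S t"
proof (induction "length ps - v" arbitrary: v rule: less_induct)
  case less
  have t: "t < length ps" "children ps t = {}"
    using less.prems(2) leaves_iff by auto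
  show ?case
  proof (cases "children ps v = {}")
    case True
    then have "t = v"
      using child_towards[OF t(1) less.prems(3)] by blast
    then show ?thesis
      using True by (simp add: leaf_dist_leaf)
  next
    case False
    then have "t \<noteq> v"
      using t(2) by auto
    then obtain c where c: "c \<in> children ps v" "ancestor ps c t"
      using child_towards[OF t(1) less.prems(3)] by blast
    have "leaf_dist ps ws us S v \<le> (if v \<in> S then us ! c else ws ! c) + leaf_dist ps ws us S c"
      unfolding leaf_dist_inner[OF False] using c(1) finite_children by (intro Min_le) auto
    moreover have "c < length ps" "length ps - c < length ps - v"
      using c(1) by (auto simp: children_def)
    then have "path_len ps ws us S c + leaf_dist ps ws us S c \<le> path_len ps ws us S t"
      using less.hyps less.prems(2) c(2) by blast
    ultimately show ?thesis
      using path_len_child[OF c(1)] edge_len_child[OF c(1)] by simp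
  qed
qed

lemma leaf_dist_attained:
  "v < length ps \<Longrightarrow>
   \<exists>t\<in>leaves ps. ancestor ps v t
     \<and> path_len ps ws us S t = path_len ps ws us S v + leaf_dist ps ws us S v"
proof (induction "length ps - v" arbitrary: v rule: less_induct)
  case less
  show ?case
  proof (cases "children ps v = {}")
    case True
    then show ?thesis
      using less.prems by (intro bexI[of _ v]) (auto simp: leaves_iff leaf_dist_leaf)
  next
    case False
    let ?f = "\<lambda>c. (if v \<in> S then us ! c else ws ! c) + leaf_dist ps ws us S c"
    have "Min (?f ` children ps v) \<in> ?f ` children ps v"
      using False finite_children by (intro Min_in) auto
    then obtain c where c: "c \<in> children ps v" "leaf_dist ps ws us S v = ?f c"
      using leaf_dist_inner[OF False] by auto
    have "c < length ps" "length ps - c < length ps - v"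
      using c(1) by (auto simp: children_def)
    then obtain t where t: "t \<in> leaves ps" "ancestor ps c t"
        "path_len ps ws us S t = path_len ps ws us S c + leaf_dist ps ws us S c"
      using less.hyps by blast
    have "ancestor ps v t"
      using ancestor_trans[OF ancestor_child[OF c(1)] t(2)] .
    then show ?thesis
      using t c path_len_child[OF c(1)] edge_len_child[OF c(1)] by auto
  qed
qed

lemma objective_eq_leaf_dist: "objective ps ws us S = leaf_dist ps ws us S 0"
proof -
  have root: "0 < length ps"
    using nonempty by simp
  obtain t where "t \<in> leaves ps" "path_len ps ws us S t = leaf_dist ps ws us S 0"
    using leaf_dist_attained[OF root, of ws us S] path_len_root[of ws us S] by auto
  then have "leaf_dist ps ws us S 0 \<in> path_len ps ws us S ` leaves ps"
    by (metis image_eqI)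
  moreover have "leaf_dist ps ws us S 0 \<le> path_len ps ws us S t" if "t \<in> leaves ps" for t
    using leaf_dist_le_path[OF root that] ancestor_root that path_len_root by (simp add: leaves_iff)
  moreover have "finite (leaves ps)"
    unfolding leaves_def tV_def by auto
  ultimately show ?thesis
    unfolding objective_def by (intro Min_eqI) auto
qed

end

section \<open>Tables of optimal upgrade sets\<close>

definition depends_only_on :: "(nat set \<Rightarrow> real) \<Rightarrow> nat set \<Rightarrow> bool" where
  "depends_only_on F D \<longleftrightarrow> (\<forall>S. F S = F (S \<inter> D))"

definition optimal_entry :: "(nat set \<Rightarrow> real) \<Rightarrow> nat set \<Rightarrow> nat \<Rightarrow> real \<times> nat list \<Rightarrow> bool" where
  "optimal_entry F D k e \<longleftrightarrow>
     set (snd e) \<subseteq> D \<and> length (snd e) \<le> k \<and> F (set (snd e)) = fst e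
     \<and> (\<forall>S\<subseteq>D. card S \<le> k \<longrightarrow> F S \<le> fst e)"

definition dp_table :: "(nat set \<Rightarrow> real) \<Rightarrow> nat set \<Rightarrow> nat \<Rightarrow> (real \<times> nat list) list \<Rightarrow> bool" where
  "dp_table F D K tab \<longleftrightarrow>
     finite D \<and> depends_only_on F D \<and> length tab = Suc K \<and> (\<forall>k\<le>K. optimal_entry F D k (tab ! k))"

lemma depends_only_on_cong: "depends_only_on F D \<Longrightarrow> S \<inter> D = S' \<inter> D \<Longrightarrow> F S = F S'"
  unfolding depends_only_on_def by metis

lemma depends_only_on_mono: "depends_only_on F D \<Longrightarrow> D \<subseteq> D' \<Longrightarrow> depends_only_on F D'"
  unfolding depends_only_on_def by (metis Int_absorb1 Int_assoc)

lemma dp_table_zero: "finite D \<Longrightarrow> dp_table (\<lambda>_. 0) D K (replicate (Suc K) (0, []))"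
  by (simp add: dp_table_def depends_only_on_def optimal_entry_def del: replicate.simps)

lemma shift_eq_map: "shift L xs = map (\<lambda>(a, s). (L + a, s)) xs"
  by (induction L xs rule: shift.induct) auto

lemma dp_table_shift: "dp_table F D K tab \<Longrightarrow> dp_table (\<lambda>S. L + F S) D K (shift L tab)"
  unfolding dp_table_def depends_only_on_def optimal_entry_def shift_eq_map
  by (auto simp: case_prod_beta)

definition combine_entries :: "(real \<times> nat list) \<times> (real \<times> nat list) \<Rightarrow> real \<times> nat list \<times> nat list" where
  "combine_entries p = (min (fst (fst p)) (fst (snd p)), snd (fst p), snd (snd p))"

lemma bestk_spec:
  "bestk xs ys p \<in> insert p (combine_entries ` set (zip xs ys)) \<and> fst p \<le> fst (bestk xs ys p)
   \<and> (\<forall>x\<in>set (zip xs ys). fst (combine_entries x) \<le> fst (bestk xs ys p))"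
proof (induction xs ys p rule: bestk.induct)
  case (1 g s1 gs c s2 cs b t1 t2)
  have "combine_entries ((g, s1), (c, s2)) = (min g c, s1, s2)"
    by (simp add: combine_entries_def)
  then show ?case
    using "1.IH" by (cases "b < min g c") auto
qed auto

lemma bestk0_spec:
  assumes "xs \<noteq> []" "ys \<noteq> []"
  shows "bestk0 xs ys \<in> combine_entries ` set (zip xs ys)
    \<and> (\<forall>x\<in>set (zip xs ys). fst (combine_entries x) \<le> fst (bestk0 xs ys))"
proof -
  obtain g s1 xs' c s2 ys' where "xs = (g, s1) # xs'" "ys = (c, s2) # ys'"
    using assms by (metis list.exhaust prod.exhaust)
  then show ?thesis
    using bestk_spec[of xs' ys' "(min g c, s1, s2)"] by (auto simp: combine_entries_def)
qed

lemma set_zip_rev_take: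
  assumes "k < length G" "k < length C"
  shows "set (zip (rev (take (Suc k) G)) C) = (\<lambda>j. (G ! (k - j), C ! j)) ` {..k}"
proof -
  let ?R = "rev (take (Suc k) G)"
  have len: "length ?R = Suc k"
    using assms by simp
  have nth: "?R ! j = G ! (k - j)" if "j \<le> k" for j
    using assms that by (simp add: rev_nth)
  show ?thesis
  proof (intro equalityI subsetI)
    fix x assume "x \<in> set (zip ?R C)"
    then obtain i where "i < Suc k" "x = (?R ! i, C ! i)"
      unfolding set_zip using len by auto
    then show "x \<in> (\<lambda>j. (G ! (k - j), C ! j)) ` {..k}"
      using nth by auto
  next
    fix x assume "x \<in> (\<lambda>j. (G ! (k - j), C ! j)) ` {..k}"
    then obtain j where "j \<le> k" "x = (?R ! j, C ! j)"
      using nth by auto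
    then show "x \<in> set (zip ?R C)"
      unfolding set_zip using len assms by auto
  qed
qed

lemma mergeAt_spec:
  assumes "k < length G" "k < length C"
  obtains j where "j \<le> k"
    and "mergeAt G C k = (min (fst (G ! (k - j))) (fst (C ! j)), snd (G ! (k - j)) @ snd (C ! j))"
    and "\<And>i. i \<le> k \<Longrightarrow> min (fst (G ! (k - i))) (fst (C ! i)) \<le> fst (mergeAt G C k)"
proof -
  let ?q = "bestk0 (rev (take (Suc k) G)) C"
  have "rev (take (Suc k) G) \<noteq> []" "C \<noteq> []"
    using assms by auto
  note spec = bestk0_spec[OF this, unfolded set_zip_rev_take[OF assms]]
  then obtain j where "j \<le> k" "?q = combine_entries (G ! (k - j), C ! j)"
    by auto
  moreover have "mergeAt G C k = (fst ?q, fst (snd ?q) @ snd (snd ?q))"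
    by (cases ?q) (simp add: itrev_Nil)
  ultimately show ?thesis
    using that spec by (fastforce simp: combine_entries_def)
qed

lemma optimal_entry_mergeAt:
  assumes G: "dp_table F1 D1 K G" and C: "dp_table F2 D2 K C"
    and disj: "D1 \<inter> D2 = {}" and k: "k \<le> K"
  shows "optimal_entry (\<lambda>S. min (F1 S) (F2 S)) (D1 \<union> D2) k (mergeAt G C k)"
proof -
  have fin: "finite D1" "finite D2" and loc: "depends_only_on F1 D1" "depends_only_on F2 D2"
    and opt1: "\<And>i. i \<le> K \<Longrightarrow> optimal_entry F1 D1 i (G ! i)"
    and opt2: "\<And>i. i \<le> K \<Longrightarrow> optimal_entry F2 D2 i (C ! i)"
    and len: "k < length G" "k < length C"
    using G C k unfolding dp_table_def by auto
  obtain j where j: "j \<le> k"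
    and m: "mergeAt G C k = (min (fst (G ! (k - j))) (fst (C ! j)), snd (G ! (k - j)) @ snd (C ! j))"
    and best: "\<And>i. i \<le> k \<Longrightarrow> min (fst (G ! (k - i))) (fst (C ! i)) \<le> fst (mergeAt G C k)"
    using mergeAt_spec[OF len] by blast
  let ?s1 = "set (snd (G ! (k - j)))" and ?s2 = "set (snd (C ! j))"
  have e1: "?s1 \<subseteq> D1" "length (snd (G ! (k - j))) \<le> k - j" "F1 ?s1 = fst (G ! (k - j))"
    using opt1[of "k - j"] k by (auto simp: optimal_entry_def)
  have e2: "?s2 \<subseteq> D2" "length (snd (C ! j)) \<le> j" "F2 ?s2 = fst (C ! j)"
    using opt2[of j] j k by (auto simp: optimal_entry_def)
  have "F1 (?s1 \<union> ?s2) = F1 ?s1"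
    by (rule depends_only_on_cong[OF loc(1)]) (use e1 e2 disj in blast)
  moreover have "F2 (?s1 \<union> ?s2) = F2 ?s2"
    by (rule depends_only_on_cong[OF loc(2)]) (use e1 e2 disj in blast)
  moreover have "min (F1 S) (F2 S) \<le> fst (mergeAt G C k)" if S: "S \<subseteq> D1 \<union> D2" "card S \<le> k" for S
  proof -
    have "finite S"
      using S fin finite_subset by blast
    then have "card (S \<inter> D1) + card (S \<inter> D2) = card S"
      using S disj by (subst card_Un_disjoint[symmetric]) (auto intro: arg_cong[where f = card])
    then have i: "card (S \<inter> D2) \<le> k" "card (S \<inter> D1) \<le> k - card (S \<inter> D2)"
      using S by auto
    have "F1 S = F1 (S \<inter> D1)" "F2 S = F2 (S \<inter> D2)"
      by (auto intro: depends_only_on_cong[OF loc(1)] depends_only_on_cong[OF loc(2)])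
    moreover have "F1 (S \<inter> D1) \<le> fst (G ! (k - card (S \<inter> D2)))"
      using opt1[of "k - card (S \<inter> D2)"] i k by (auto simp: optimal_entry_def)
    moreover have "F2 (S \<inter> D2) \<le> fst (C ! card (S \<inter> D2))"
      using opt2[of "card (S \<inter> D2)"] i k by (auto simp: optimal_entry_def)
    ultimately show ?thesis
      using best[OF i(1)] by linarith
  qed
  ultimately show ?thesis
    unfolding optimal_entry_def m using e1 e2 j by auto
qed

lemma length_mergeFrom: "length (mergeFrom G C k r) = r"
  by (induction r arbitrary: k) auto

lemma nth_mergeFrom: "i < r \<Longrightarrow> mergeFrom G C k r ! i = mergeAt G C (k + i)"
  by (induction r arbitrary: k i) (auto simp: nth_Cons split: nat.split)

lemma dp_table_merge:
  assumes G: "dp_table F1 D1 K G" and C: "dp_table F2 D2 K C" and disj: "D1 \<inter> D2 = {}"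
  shows "dp_table (\<lambda>S. min (F1 S) (F2 S)) (D1 \<union> D2) K (mergeFrom G C 0 (Suc K))"
proof -
  have "depends_only_on F1 (D1 \<union> D2)" "depends_only_on F2 (D1 \<union> D2)"
    using G C depends_only_on_mono unfolding dp_table_def by blast+
  then have "depends_only_on (\<lambda>S. min (F1 S) (F2 S)) (D1 \<union> D2)"
    unfolding depends_only_on_def by metis
  moreover have "optimal_entry (\<lambda>S. min (F1 S) (F2 S)) (D1 \<union> D2) k (mergeFrom G C 0 (Suc K) ! k)"
    if "k \<le> K" for k
    using optimal_entry_mergeAt[OF G C disj that] that by (subst nth_mergeFrom) simp_all
  ultimately show ?thesis
    using G C unfolding dp_table_def by (simp add: length_mergeFrom)
qed

fun pick_upgrade :: "nat \<Rightarrow> real \<times> nat list \<Rightarrow> real \<times> nat list \<Rightarrow> real \<times> nat list" where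
  "pick_upgrade v (a, sa) (b, sb) = (if a < b then (b, v # sb) else (a, sa))"

lemma cx2_eq_map2: "cx2 xs ys v = map2 (pick_upgrade v) xs ys"
  by (induction xs ys v rule: cx2.induct) auto

lemma optimal_entry_upgrade_0:
  assumes "finite D" "v \<notin> D" "optimal_entry FW D 0 e"
  shows "optimal_entry (\<lambda>S. if v \<in> S then FU S else FW S) (insert v D) 0 e"
proof -
  have "S = {}" if "S \<subseteq> insert v D" "card S \<le> 0" for S
    using that assms(1) finite_subset by fastforce
  then show ?thesis
    using assms unfolding optimal_entry_def by auto
qed

lemma optimal_entry_pick_upgrade:
  assumes D: "finite D" "v \<notin> D" and FU: "depends_only_on FU D"
    and W: "optimal_entry FW D (Suc k) ew" and U: "optimal_entry FU D k eu"
  shows "optimal_entry (\<lambda>S. if v \<in> S then FU S else FW S) (insert v D) (Suc k) (pick_upgrade v ew eu)"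
proof -
  obtain a sa b sb where e: "ew = (a, sa)" "eu = (b, sb)"
    by fastforce
  have W': "set sa \<subseteq> D" "length sa \<le> Suc k" "FW (set sa) = a"
      "\<And>S. S \<subseteq> D \<Longrightarrow> card S \<le> Suc k \<Longrightarrow> FW S \<le> a"
    using W e by (auto simp: optimal_entry_def)
  have U': "set sb \<subseteq> D" "length sb \<le> k" "FU (set sb) = b"
      "\<And>S. S \<subseteq> D \<Longrightarrow> card S \<le> k \<Longrightarrow> FU S \<le> b"
    using U e by (auto simp: optimal_entry_def)
  have upgraded: "FU (insert v (set sb)) = b"
    using depends_only_on_cong[OF FU, of "insert v (set sb)" "set sb"] U' D by auto
  \<comment> \<open>an optimal set either avoids v, or contains v and has at most k further elements\<close>
  have best: "(if v \<in> S then FU S else FW S) \<le> max a b" if S: "S \<subseteq> insert v D" "card S \<le> Suc k" for S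
  proof (cases "v \<in> S")
    case True
    have "finite S"
      using S D finite_subset by blast
    then have "card (S - {v}) \<le> k"
      using S True by simp
    moreover have "FU S = FU (S - {v})"
      by (rule depends_only_on_cong[OF FU]) (use D in blast)
    ultimately show ?thesis
      using U'(4)[of "S - {v}"] S True by fastforce
  next
    case False
    then show ?thesis
      using W'(4)[of S] S by fastforce
  qed
  show ?thesis
  proof (cases "a < b")
    case True
    then show ?thesis
      using best U' upgraded unfolding e optimal_entry_def by (auto simp: max_def)
  next
    case False
    then show ?thesis
      using best W' D(2) unfolding e optimal_entry_def by (auto simp: max_def)
  qed
qed

lemma dp_table_upgrade:
  assumes W: "dp_table FW D K W" and U: "dp_table FU D K U" and v: "v \<notin> D"
  shows "dp_table (\<lambda>S. if v \<in> S then FU S else FW S) (insert v D) K (cx W U v)"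
proof -
  have D: "finite D" and loc: "depends_only_on FW D" "depends_only_on FU D"
    and len: "length W = Suc K" "length U = Suc K"
    and optW: "\<And>k. k \<le> K \<Longrightarrow> optimal_entry FW D k (W ! k)"
    and optU: "\<And>k. k \<le> K \<Longrightarrow> optimal_entry FU D k (U ! k)"
    using W U unfolding dp_table_def by auto
  obtain w ws where W_eq: "W = w # ws"
    using len by (cases W) auto
  have "depends_only_on (\<lambda>S. if v \<in> S then FU S else FW S) (insert v D)"
    using loc depends_only_on_mono[of _ D "insert v D"] unfolding depends_only_on_def
    by (metis Int_iff insertI1 subset_insertI)
  moreover have "length (cx W U v) = Suc K"
    using len W_eq by (simp add: cx2_eq_map2)
  moreover have "optimal_entry (\<lambda>S. if v \<in> S then FU S else FW S) (insert v D) k (cx W U v ! k)"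
    if "k \<le> K" for k
  proof (cases k)
    case 0
    then show ?thesis
      using optimal_entry_upgrade_0[OF D v optW[of 0]] W_eq by simp
  next
    case (Suc j)
    then have "cx W U v ! k = pick_upgrade v (W ! Suc j) (U ! j)"
      using that len W_eq by (simp add: cx2_eq_map2)
    then show ?thesis
      using optimal_entry_pick_upgrade[OF D v loc(2) optW[of "Suc j"] optU[of j]] that Suc by simp
  qed
  ultimately show ?thesis
    using D unfolding dp_table_def by simp
qed

section \<open>Correctness of the dynamic program\<close>

lemma kids_mem: "x \<in> set (kids v xs i) \<longleftrightarrow> i \<le> x \<and> x < i + length xs \<and> xs ! (x - i) = v \<and> x \<noteq> 0"
proof (induction xs arbitrary: i)
  case (Cons p xs)
  show ?case
  proof (cases "x = i")
    case True
    have "i \<notin> set (kids v xs (Suc i))"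
      using Cons.IH[of "Suc i"] True by simp
    then show ?thesis
      using True by auto
  next
    case False
    have "Suc i \<le> x \<Longrightarrow> (p # xs) ! (x - i) = xs ! (x - Suc i)"
      by (metis Suc_diff_Suc Suc_le_lessD diff_Suc_Suc nth_Cons_Suc)
    then show ?thesis
      using False Cons.IH[of "Suc i"] by auto
  qed
qed simp

lemma distinct_kids: "distinct (kids v xs i)"
proof (induction xs arbitrary: i)
  case (Cons p xs)
  have "i \<notin> set (kids v xs (Suc i))"
    using kids_mem by auto
  then show ?case
    using Cons.IH by auto
qed simp

lemma Min_insert_min: "finite A \<Longrightarrow> Min (insert (min a b) A) = Min (insert (a :: real) (insert b A))"
  by (cases "A = {}") (auto simp: min.assoc)

lemma zeros_eq_replicate: "zeros k = replicate k (0, [])"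
  by (induction k) auto

context parent_tree
begin

lemma set_kids: "set (kids v ps 0) = children ps v"
proof -
  have "x \<in> set (kids v ps 0) \<longleftrightarrow> x \<in> children ps v" for x
    unfolding kids_mem children_iff by auto
  then show ?thesis
    by blast
qed

abbreviation subtree_table :: "real list \<Rightarrow> real list \<Rightarrow> nat \<Rightarrow> nat \<Rightarrow> (real \<times> nat list) list \<Rightarrow> bool" where
  "subtree_table ws us K v tab \<equiv> dp_table (\<lambda>S. leaf_dist ps ws us S v) (subtree ps v) K tab"

lemma dp_table_mergeKids:
  assumes "dp_table F D K G" "set cs \<subseteq> children ps v" "distinct cs"
    and "\<And>c. c \<in> set cs \<Longrightarrow> D \<inter> subtree ps c = {}"
    and "\<And>c. c \<in> set cs \<Longrightarrow> subtree_table ws us K c (acc ! (c - v - 1))"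
  shows "dp_table (\<lambda>S. Min (insert (F S) ((\<lambda>c. ls ! c + leaf_dist ps ws us S c) ` set cs)))
           (D \<union> (\<Union>c\<in>set cs. subtree ps c)) K (mergeKids ls acc v K G cs)"
  using assms
proof (induction cs arbitrary: F D G)
  case (Cons c cs)
  have "dp_table (\<lambda>S. ls ! c + leaf_dist ps ws us S c) (subtree ps c) K (childTab ls acc v c)"
    using Cons.prems(5) by (simp add: dp_table_shift)
  then have merged: "dp_table (\<lambda>S. min (F S) (ls ! c + leaf_dist ps ws us S c)) (D \<union> subtree ps c) K
      (mergeFrom G (childTab ls acc v c) 0 (Suc K))"
    using dp_table_merge Cons.prems(1,4) by simp
  have "(D \<union> subtree ps c) \<inter> subtree ps c' = {}" if "c' \<in> set cs" for c'
    using Cons.prems(2-4) subtree_children_disjoint[of c v c'] that by auto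
  then have "dp_table (\<lambda>S. Min (insert (min (F S) (ls ! c + leaf_dist ps ws us S c))
        ((\<lambda>c. ls ! c + leaf_dist ps ws us S c) ` set cs)))
      (D \<union> subtree ps c \<union> (\<Union>c\<in>set cs. subtree ps c)) K
      (mergeKids ls acc v K (mergeFrom G (childTab ls acc v c) 0 (Suc K)) cs)"
    using Cons.IH[OF merged] Cons.prems(2,3,5) by auto
  then show ?case
    by (simp add: Min_insert_min Un_assoc)
qed simp

lemma dp_table_kidsTab:
  assumes "cs \<noteq> []" "set cs \<subseteq> children ps v" "distinct cs"
    and "\<And>c. c \<in> set cs \<Longrightarrow> subtree_table ws us K c (acc ! (c - v - 1))"
  shows "dp_table (\<lambda>S. Min ((\<lambda>c. ls ! c + leaf_dist ps ws us S c) ` set cs))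
           (\<Union>c\<in>set cs. subtree ps c) K (kidsTab ls acc v K cs)"
proof -
  obtain c cs' where cs: "cs = c # cs'"
    using assms(1) by (cases cs) auto
  have "dp_table (\<lambda>S. ls ! c + leaf_dist ps ws us S c) (subtree ps c) K (childTab ls acc v c)"
    using assms(4) cs by (simp add: dp_table_shift)
  moreover have "subtree ps c \<inter> subtree ps c' = {}" if "c' \<in> set cs'" for c'
    using assms(2,3) cs subtree_children_disjoint[of c v c'] that by auto
  ultimately show ?thesis
    using dp_table_mergeKids[of _ "subtree ps c" K "childTab ls acc v c" cs' v ws us acc ls] assms cs
    by auto
qed

lemma dp_table_node:
  assumes v: "v < length ps"
    and acc: "\<And>c. c \<in> children ps v \<Longrightarrow> subtree_table ws us K c (acc ! (c - v - 1))"
  shows "subtree_table ws us K v (node ps ws us K v acc)"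
proof (cases "children ps v = {}")
  case True
  then have "node ps ws us K v acc = replicate (Suc K) (0, [])"
    using set_kids[of v] by (simp add: zeros_eq_replicate)
  then show ?thesis
    using True dp_table_zero[OF finite_subtree] by (simp add: leaf_dist_leaf)
next
  case False
  let ?cs = "kids v ps 0"
  have "set ?cs = children ps v"
    by (rule set_kids)
  then have cs: "?cs \<noteq> []" "set ?cs \<subseteq> children ps v" "distinct ?cs"
    using False distinct_kids by auto
  have kt: "dp_table (\<lambda>S. Min ((\<lambda>c. ls ! c + leaf_dist ps ws us S c) ` children ps v))
      (\<Union>c\<in>children ps v. subtree ps c) K (kidsTab ls acc v K ?cs)" for ls
    using dp_table_kidsTab[OF cs acc] set_kids by simp
  have "v \<notin> (\<Union>c\<in>children ps v. subtree ps c)"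
    using notin_subtree_child by blast
  note upgrade = dp_table_upgrade[OF kt[of ws] kt[of us] this]
  have "leaf_dist ps ws us S v =
      (if v \<in> S then Min ((\<lambda>c. us ! c + leaf_dist ps ws us S c) ` children ps v)
       else Min ((\<lambda>c. ws ! c + leaf_dist ps ws us S c) ` children ps v))" for S
    using leaf_dist_inner[OF False] by simp
  then show ?thesis
    using upgrade subtree_decomp[OF v] cs(1) by (simp add: Let_def)
qed

definition suffix_tables :: "real list \<Rightarrow> real list \<Rightarrow> nat \<Rightarrow> nat \<Rightarrow> (real \<times> nat list) list list \<Rightarrow> bool" where
  "suffix_tables ws us K v acc \<longleftrightarrow>
     length acc = length ps - v \<and> (\<forall>i<length acc. subtree_table ws us K (v + i) (acc ! i))"

lemma suffix_tables_child:
  assumes "suffix_tables ws us K (Suc v) acc" "c \<in> children ps v"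
  shows "subtree_table ws us K c (acc ! (c - v - 1))"
proof -
  have "c - v - 1 < length acc" "Suc v + (c - v - 1) = c"
    using assms unfolding suffix_tables_def children_def by auto
  then show ?thesis
    using assms(1) unfolding suffix_tables_def by metis
qed

lemma suffix_tables_Cons:
  assumes "v < length ps" "suffix_tables ws us K (Suc v) acc"
  shows "suffix_tables ws us K v (node ps ws us K v acc # acc)"
  using assms dp_table_node[OF assms(1) suffix_tables_child[OF assms(2)]]
  unfolding suffix_tables_def by (auto simp: nth_Cons split: nat.split)

lemma suffix_tables_build:
  "v \<le> length ps \<Longrightarrow> suffix_tables ws us K v acc
   \<Longrightarrow> suffix_tables ws us K 0 (build ps ws us K v acc)"
proof (induction v arbitrary: acc)
  case (Suc v)
  then show ?case
    using suffix_tables_Cons[of v] by (simp del: node.simps)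
qed simp

lemma suffix_tables_Nil: "suffix_tables ws us K (length ps) []"
  by (simp add: suffix_tables_def)

lemma dp_table_root: "dp_table (objective ps ws us) (tV ps) K (build ps ws us K (length ps) [] ! 0)"
proof -
  have "suffix_tables ws us K 0 (build ps ws us K (length ps) [])"
    using suffix_tables_build[OF order_refl suffix_tables_Nil] .
  then have "subtree_table ws us K 0 (build ps ws us K (length ps) [] ! 0)"
    using nonempty unfolding suffix_tables_def by auto
  moreover have "objective ps ws us = (\<lambda>S. leaf_dist ps ws us S 0)"
    using objective_eq_leaf_dist by blast
  ultimately show ?thesis
    by (simp add: subtree_root)
qed

end

lemma mem_iff: "mem x xs \<longleftrightarrow> x \<in> set xs"
  by (induction xs) auto

lemma length_wbList:
  "length ws = length ps \<Longrightarrow> length us = length ps \<Longrightarrow> length (wbList ps ws us Sl) = length ps"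
  by (induction ps ws us Sl rule: wbList.induct) auto

lemma nth_wbList:
  "\<lbrakk>length ws = length ps; length us = length ps; i < length ps\<rbrakk>
   \<Longrightarrow> wbList ps ws us Sl ! i = edge_len ps ws us (set Sl) i"
proof (induction ps ws us Sl arbitrary: i rule: wbList.induct)
  case (1 p ps w ws u us Sl)
  then show ?case
    by (cases i) (auto simp: edge_len_def mem_iff)
qed auto

lemma optimal_entry_solution:
  assumes "optimal_entry (objective ps ws us) (tV ps) (min K (length ps)) (val, Sl)"
  shows "feasible ps K (set Sl) \<and> objective ps ws us (set Sl) = val \<and> val = opt_value ps ws us K"
proof -
  have Sl: "set Sl \<subseteq> tV ps" "length Sl \<le> min K (length ps)" "objective ps ws us (set Sl) = val"
    and best: "\<And>S. S \<subseteq> tV ps \<Longrightarrow> card S \<le> min K (length ps) \<Longrightarrow> objective ps ws us S \<le> val"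
    using assms unfolding optimal_entry_def by auto
  have feas: "feasible ps K (set Sl)"
    using Sl card_length[of Sl] unfolding feasible_def by auto
  have "objective ps ws us S \<le> val" if "feasible ps K S" for S
  proof -
    have "card S \<le> card (tV ps)"
      using that by (intro card_mono) (auto simp: feasible_def tV_def)
    then show ?thesis
      using that best by (auto simp: feasible_def tV_def)
  qed
  moreover have "finite {S. feasible ps K S}"
    by (rule finite_subset[of _ "Pow (tV ps)"]) (auto simp: feasible_def tV_def)
  ultimately have "opt_value ps ws us K = val"
    unfolding opt_value_def using feas Sl(3) by (intro Max_eqI) auto
  then show ?thesis
    using feas Sl by simp
qed

lemma (in parent_tree) alg_correct:
  assumes "length ws = length ps" "length us = length ps"
  shows "case alg ps ws us K of (val, Sl, wb) \<Rightarrow>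
           feasible ps K (set Sl) \<and> val = opt_value ps ws us K \<and> objective ps ws us (set Sl) = val
           \<and> length wb = length ps
           \<and> (\<forall>i. 0 < i \<and> i < length ps \<longrightarrow> wb ! i = wbar ps ws us (set Sl) (ps ! i, i))"
proof -
  define Kc where "Kc = min K (length ps)"
  obtain val Sl where e: "build ps ws us Kc (length ps) [] ! 0 ! Kc = (val, Sl)"
    by (cases "build ps ws us Kc (length ps) [] ! 0 ! Kc")
  have "optimal_entry (objective ps ws us) (tV ps) Kc (build ps ws us Kc (length ps) [] ! 0 ! Kc)"
    using dp_table_root[of ws us Kc] unfolding dp_table_def by blast
  then have "optimal_entry (objective ps ws us) (tV ps) (min K (length ps)) (val, Sl)"
    by (simp only: e Kc_def[symmetric])
  then have "feasible ps K (set Sl) \<and> objective ps ws us (set Sl) = val \<and> val = opt_value ps ws us K"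
    by (rule optimal_entry_solution)
  moreover have "alg ps ws us K = (val, Sl, wbList ps ws us Sl)"
    using e unfolding Kc_def by (simp add: Let_def del: build.simps)
  moreover have "wbList ps ws us Sl ! i = wbar ps ws us (set Sl) (ps ! i, i)" if "0 < i" "i < length ps" for i
    using nth_wbList[OF assms that(2)] wbar_edge[OF that] by simp
  ultimately show ?thesis
    using length_wbList[OF assms] by simp
qed

section \<open>Running time\<close>

lemma T_kids_eq: "T_kids v xs i = length xs + 1"
  by (induction xs arbitrary: i) auto

lemma T_zeros_eq: "T_zeros k = k + 1"
  by (induction k) auto

lemma T_shift_eq: "T_shift L xs = length xs + 1"
  by (induction L xs rule: T_shift.induct) auto

lemma T_mem_eq: "T_mem x xs = length xs + 1"
  by (induction xs) auto

lemma T_bestk_le: "T_bestk xs ys p \<le> length xs + 1"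
  by (induction xs ys p rule: T_bestk.induct) auto

lemma T_bestk0_le: "T_bestk0 xs ys \<le> length xs + 1"
  by (induction xs ys rule: T_bestk0.induct) (auto intro: le_trans[OF T_bestk_le])

lemma T_cx2_le: "T_cx2 xs ys v \<le> length xs + 1"
  by (induction xs ys v rule: T_cx2.induct) auto

lemma T_cx_le: "T_cx xs ys v \<le> length xs + 1"
  by (cases xs) (auto intro: le_trans[OF T_cx2_le])

lemma T_wbList_le: "T_wbList xs ws us S \<le> length xs * (length S + 2) + 1"
  by (induction xs ws us S rule: T_wbList.induct) (auto simp: T_mem_eq)

definition table_shape :: "nat \<Rightarrow> (real \<times> nat list) list \<Rightarrow> bool" where
  "table_shape K G \<longleftrightarrow> length G = Suc K \<and> (\<forall>k\<le>K. length (snd (G ! k)) \<le> k)"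

lemma dp_table_shape: "dp_table F D K G \<Longrightarrow> table_shape K G"
  unfolding dp_table_def table_shape_def optimal_entry_def by blast

lemma table_shape_mergeFrom:
  assumes G: "table_shape K G" and C: "table_shape K C"
  shows "table_shape K (mergeFrom G C 0 (Suc K))"
proof -
  have "length (snd (mergeFrom G C 0 (Suc K) ! k)) \<le> k" if k: "k \<le> K" for k
  proof -
    have "k < length G" "k < length C"
      using G C k unfolding table_shape_def by auto
    then obtain j where "j \<le> k" "snd (mergeAt G C k) = snd (G ! (k - j)) @ snd (C ! j)"
      using mergeAt_spec by (metis snd_conv)
    moreover have "length (snd (G ! (k - j))) \<le> k - j" "length (snd (C ! j)) \<le> j"
      using G C k \<open>j \<le> k\<close> unfolding table_shape_def by auto
    ultimately show ?thesis
      using k by (subst nth_mergeFrom) auto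
  qed
  then show ?thesis
    unfolding table_shape_def by (simp add: length_mergeFrom)
qed

lemma T_mergeAt_le:
  assumes G: "table_shape K G" and C: "length C = Suc K" and k: "k \<le> K"
  shows "T_mergeAt G C k \<le> 4 * K + 7"
proof -
  have len: "k < length G" "k < length C"
    using G C k unfolding table_shape_def by auto
  let ?q = "bestk0 (rev (take (Suc k) G)) C"
  have "rev (take (Suc k) G) \<noteq> []" "C \<noteq> []"
    using len by auto
  then have "?q \<in> combine_entries ` (\<lambda>j. (G ! (k - j), C ! j)) ` {..k}"
    using bestk0_spec set_zip_rev_take[OF len] by metis
  then obtain j where j: "j \<le> k" "?q = combine_entries (G ! (k - j), C ! j)"
    by auto
  have "length (snd (G ! (k - j))) \<le> K"
    using G k unfolding table_shape_def by (meson diff_le_self le_trans)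
  then have "T_fin ?q \<le> K + 1"
    using j(2) by (simp add: combine_entries_def T_append)
  moreover have "T_bestk0 (rev (take (Suc k) G)) C \<le> k + 2"
    using T_bestk0_le[of "rev (take (Suc k) G)" C] len by simp
  moreover have "T_mergeAt G C k = (k + 2) + (k + 2) + T_bestk0 (rev (take (Suc k) G)) C + T_fin ?q"
    using len by (simp add: T_take T_itrev itrev_Nil)
  ultimately show ?thesis
    using k by linarith
qed

lemma T_mergeFrom_le:
  "(\<And>i. i < r \<Longrightarrow> T_mergeAt G C (k + i) \<le> M) \<Longrightarrow> T_mergeFrom G C k r \<le> r * (M + 1) + 1"
proof (induction r arbitrary: k)
  case (Suc r)
  have "T_mergeAt G C (Suc k + i) \<le> M" if "i < r" for i
    using Suc.prems[of "Suc i"] that by simp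
  then have "T_mergeFrom G C (Suc k) r \<le> r * (M + 1) + 1"
    by (rule Suc.IH)
  moreover have "T_mergeAt G C k \<le> M"
    using Suc.prems[of 0] by simp
  ultimately show ?case
    by simp
qed simp

lemma T_mergeFrom_table:
  assumes "table_shape K G" "table_shape K C"
  shows "T_mergeFrom G C 0 (Suc K) \<le> (K + 1) * (4 * K + 8) + 1"
proof -
  have "T_mergeFrom G C 0 (Suc K) \<le> Suc K * (4 * K + 7 + 1) + 1"
    using assms by (intro T_mergeFrom_le T_mergeAt_le) (auto simp: table_shape_def)
  moreover have "Suc K * (4 * K + 7 + 1) = (K + 1) * (4 * K + 8)"
    by simp
  ultimately show ?thesis
    by (simp only:)
qed

lemma T_mergeKids_le:
  assumes "table_shape K G"
    and "\<And>c. c \<in> set cs \<Longrightarrow> table_shape K (childTab ls acc v c) \<and> T_childTab ls acc v c \<le> X"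
  shows "T_mergeKids ls acc v K G cs \<le> length cs * (X + (K + 1) * (4 * K + 8) + 2) + 1"
  using assms
proof (induction cs arbitrary: G)
  case (Cons c cs)
  have c: "table_shape K (childTab ls acc v c)" "T_childTab ls acc v c \<le> X"
    using Cons.prems(2) by auto
  have "T_mergeKids ls acc v K (mergeFrom G (childTab ls acc v c) 0 (Suc K)) cs
      \<le> length cs * (X + (K + 1) * (4 * K + 8) + 2) + 1"
    using Cons.IH[OF table_shape_mergeFrom[OF Cons.prems(1) c(1)]] Cons.prems(2) by simp
  then show ?case
    using c(2) T_mergeFrom_table[OF Cons.prems(1) c(1)] by simp
qed simp

lemma T_kidsTab_le:
  assumes "\<And>c. c \<in> set cs \<Longrightarrow> table_shape K (childTab ls acc v c) \<and> T_childTab ls acc v c \<le> X"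
  shows "T_kidsTab ls acc v K cs \<le> length cs * (X + (K + 1) * (4 * K + 8) + 2) + 1"
proof (cases cs)
  case (Cons c cs')
  then have "T_mergeKids ls acc v K (childTab ls acc v c) cs'
      \<le> length cs' * (X + (K + 1) * (4 * K + 8) + 2) + 1"
    using assms by (intro T_mergeKids_le) auto
  then show ?thesis
    using assms Cons by fastforce
qed simp

lemma sum_length_kids_le: "(\<Sum>u<N. length (kids u xs i)) \<le> length xs"
proof (induction xs arbitrary: i)
  case (Cons p xs)
  have "(\<Sum>u<N. length (kids u (p # xs) i))
      = (\<Sum>u<N. (if p = u \<and> i \<noteq> 0 then 1 else 0) + length (kids u xs (Suc i)))"
    by (intro sum.cong) auto
  also have "\<dots> = (\<Sum>u<N. if p = u \<and> i \<noteq> 0 then 1 else 0) + (\<Sum>u<N. length (kids u xs (Suc i)))"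
    by (rule sum.distrib)
  also have "(\<Sum>u<N. if p = u \<and> i \<noteq> 0 then 1 else 0 :: nat) \<le> (\<Sum>u<N. if p = u then 1 else 0)"
    by (intro sum_mono) auto
  also have "(\<Sum>u<N. if p = u then 1 else 0 :: nat) \<le> 1"
    by (simp add: sum.delta)
  finally show ?case
    using Cons.IH[of "Suc i"] by simp
qed simp

context parent_tree
begin

(* The steps spent on one child: fetching and shifting its table, then merging it into its parent's. *)
definition child_cost :: "nat \<Rightarrow> nat" where
  "child_cost K = (2 * length ps + K + 2) + (K + 1) * (4 * K + 8) + 2"

lemma T_childTab_le:
  assumes "suffix_tables ws us K (Suc v) acc" "c \<in> children ps v" "length ls = length ps"
  shows "table_shape K (childTab ls acc v c) \<and> T_childTab ls acc v c \<le> 2 * length ps + K + 2"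
proof -
  have tab: "subtree_table ws us K c (acc ! (c - v - 1))"
    using suffix_tables_child[OF assms(1,2)] .
  have c: "c - v - 1 < length acc" "c < length ps"
    using assms(1,2) unfolding suffix_tables_def children_def by auto
  then have "T_childTab ls acc v c = (c + 1) + (c - v - 1 + 1) + (K + 2)"
    using tab assms(3) by (simp add: T_nth T_shift_eq dp_table_def)
  moreover have "table_shape K (childTab ls acc v c)"
    using dp_table_shape[OF dp_table_shift[OF tab]] by simp
  ultimately show ?thesis
    using c by simp
qed

lemma T_node_le:
  assumes v: "v < length ps" and lens: "length ws = length ps" "length us = length ps"
    and acc: "suffix_tables ws us K (Suc v) acc"
  shows "T_node ps ws us K v acc \<le> length ps + K + 5 + 2 * child_cost K * length (kids v ps 0)"
proof (cases "kids v ps 0 = []")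
  case True
  then show ?thesis
    by (simp add: T_kids_eq T_zeros_eq)
next
  case False
  let ?cs = "kids v ps 0"
  have kids_tab: "T_kidsTab ls acc v K ?cs \<le> length ?cs * child_cost K + 1" if "length ls = length ps" for ls
    unfolding child_cost_def
    using T_childTab_le[OF acc _ that] set_kids by (intro T_kidsTab_le) auto
  moreover have "length (kidsTab ws acc v K ?cs) = Suc K"
    using dp_table_kidsTab[OF False _ distinct_kids suffix_tables_child[OF acc]] set_kids
    unfolding dp_table_def by auto
  then have "T_cx (kidsTab ws acc v K ?cs) (kidsTab us acc v K ?cs) v \<le> K + 2"
    using T_cx_le[of "kidsTab ws acc v K ?cs"] by simp
  moreover have "T_node ps ws us K v acc = (length ps + 1) + (T_kidsTab ws acc v K ?cs
      + (T_kidsTab us acc v K ?cs + T_cx (kidsTab ws acc v K ?cs) (kidsTab us acc v K ?cs) v))"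
    using False by (simp add: T_kids_eq Let_def)
  moreover have "2 * child_cost K * length ?cs = length ?cs * child_cost K + length ?cs * child_cost K"
    by simp
  ultimately show ?thesis
    using kids_tab[OF lens(1)] kids_tab[OF lens(2)] by linarith
qed

lemma T_build_le:
  assumes "length ws = length ps" "length us = length ps"
  shows "v \<le> length ps \<Longrightarrow> suffix_tables ws us K v acc \<Longrightarrow>
    T_build ps ws us K v acc
      \<le> v * (length ps + K + 6) + 2 * child_cost K * (\<Sum>u<v. length (kids u ps 0)) + 1"
proof (induction v arbitrary: acc)
  case (Suc v)
  have "T_build ps ws us K v (node ps ws us K v acc # acc)
      \<le> v * (length ps + K + 6) + 2 * child_cost K * (\<Sum>u<v. length (kids u ps 0)) + 1"
    using Suc.IH suffix_tables_Cons Suc.prems by simp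
  moreover have "T_node ps ws us K v acc \<le> length ps + K + 5 + 2 * child_cost K * length (kids v ps 0)"
    using T_node_le assms Suc.prems by simp
  ultimately show ?case
    by (simp add: add_mult_distrib2 del: node.simps T_node.simps)
qed simp

lemma T_build_root_le:
  assumes "length ws = length ps" "length us = length ps"
  shows "T_build ps ws us K (length ps) [] \<le> length ps * (length ps + K + 6) + 2 * child_cost K * length ps + 1"
  using T_build_le[OF assms order_refl suffix_tables_Nil, of K]
    mult_le_mono2[OF sum_length_kids_le[of ps 0 "length ps"], of "2 * child_cost K"]
  by linarith

lemma child_cost_le:
  assumes "K \<le> length ps"
  shows "child_cost K \<le> 4 * length ps * length ps + 15 * length ps + 12"
proof -
  have "(K + 1) * (4 * K + 8) \<le> (length ps + 1) * (4 * length ps + 8)"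
    using assms by (intro mult_le_mono) auto
  then show ?thesis
    using assms unfolding child_cost_def by (simp add: algebra_simps)
qed

end

lemma cubic_le: "1 \<le> (n :: nat) \<Longrightarrow> 8 * n * n * n + 33 * n * n + 34 * n + 5 \<le> 80 * n ^ 3"
proof -
  assume n: "1 \<le> n"
  have "n * n \<le> n * n * n" "n \<le> n * n"
    using mult_le_mono2[OF n, of "n * n"] mult_le_mono2[OF n, of n] by simp_all
  moreover have "n ^ 3 = n * n * n"
    by (simp add: power3_eq_cube)
  ultimately show ?thesis
    using n by linarith
qed

lemma (in parent_tree) T_alg_le:
  assumes lens: "length ws = length ps" "length us = length ps"
  shows "T_alg ps ws us K \<le> 80 * length ps ^ 3"
proof -
  define n where "n = length ps"
  define Kc where "Kc = min K n"
  let ?B = "build ps ws us Kc n []"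
  have n: "1 \<le> n" "Kc \<le> n"
    using nonempty unfolding n_def Kc_def by (auto simp: Suc_le_eq)
  have B: "dp_table (objective ps ws us) (tV ps) Kc (?B ! 0)" "length ?B = n"
    using dp_table_root suffix_tables_build[OF order_refl suffix_tables_Nil]
    unfolding n_def suffix_tables_def by auto
  obtain val Sl where e: "?B ! 0 ! Kc = (val, Sl)"
    by (cases "?B ! 0 ! Kc")
  have "optimal_entry (objective ps ws us) (tV ps) Kc (?B ! 0 ! Kc)"
    using B(1) unfolding dp_table_def by blast
  then have "length Sl \<le> n"
    using e n unfolding optimal_entry_def by auto
  then have "T_wbList ps ws us Sl \<le> n * (n + 2) + 1"
    using T_wbList_le[of ps ws us Sl] mult_le_mono2[of "length Sl + 2" "n + 2" n]
    unfolding n_def by linarith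
  moreover have "T_alg ps ws us K = (n + 1) + (T_build ps ws us Kc n [] + 1 + (Kc + 1) + T_wbList ps ws us Sl)"
    using B e nonempty unfolding n_def Kc_def dp_table_def
    by (simp add: Let_def T_length T_nth del: build.simps T_build.simps)
  moreover have "2 * child_cost Kc * n \<le> 2 * (4 * n * n + 15 * n + 12) * n"
    using child_cost_le[of Kc] n unfolding n_def by simp
  moreover have "n * (n + Kc + 6) \<le> n * (2 * n + 6)"
    using n by simp
  ultimately have "T_alg ps ws us K
      \<le> (n + 1) + (n * (2 * n + 6) + 2 * (4 * n * n + 15 * n + 12) * n + 1) + 1 + (n + 1) + (n * (n + 2) + 1)"
    using T_build_root_le[OF lens, of Kc] n(2) unfolding n_def[symmetric] by linarith
  also have "\<dots> = 8 * n * n * n + 33 * n * n + 34 * n + 5"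
    by (simp add: algebra_simps)
  also have "\<dots> \<le> 80 * n ^ 3"
    using cubic_le[OF n(1)] .
  finally show ?thesis
    unfolding n_def .
qed

theorem mainTheorem1:
  "\<exists>C::nat. \<forall>(ps::nat list) (ws::real list) (us::real list) (K::nat).
     tree_input ps ws us \<longrightarrow>
       (case alg ps ws us K of (val, Sl, wb) \<Rightarrow>
          feasible ps K (set Sl)
        \<and> val = opt_value ps ws us K
        \<and> objective ps ws us (set Sl) = val
        \<and> length wb = length ps
        \<and> (\<forall>i. 0 < i \<and> i < length ps \<longrightarrow> wb ! i = wbar ps ws us (set Sl) (ps ! i, i)))
     \<and> T_alg ps ws us K \<le> C * length ps ^ 3"
proof (intro exI[of _ 80] allI impI, goal_cases)
  case (1 ps ws us K)
  then interpret parent_tree ps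
    by (rule tree_input_parent_tree)
  have lens: "length ws = length ps" "length us = length ps"
    using 1 by (auto simp: tree_input_def)
  show ?case
    using conjI[OF alg_correct[OF lens] T_alg_le[OF lens]] .
qed

end
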